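(* Consider the setting in the context, with strike $K\in(0,\infty)$. Let $\bar w=W\left(s_0e^{(\delta-\frac{\eta^2}{2})T}\eta^2T\lambda\gamma(1-\rho^2)\right)$ and suppose $$K\ge\frac1{\lambda\gamma(1-\rho^2)}\left(\frac{\bar w}{\eta^2T}+\frac{\bar w^2}{2\eta^2T}\right).$$ Then $p^{put}=D^{put}+A^{put}$, where $$D^{put}=\lambda e^{-rT}K-\frac{e^{-rT}}{\gamma(1-\rho^2)}\left(\frac{\bar w}{\eta^2T}+\frac{\bar w^2}{2\eta^2T}\right),\qquad A^{put}=\frac{e^{-rT}}{\gamma(1-\rho^2)}\ln\mathbb E(\psi_K(N)),$$ $$\psi_K(y)=\exp\left(-\frac{\bar w}{\eta^2T}\left(e^{\eta\sqrt Ty}-1-\eta\sqrt Ty\right)+\left(\frac{\bar w}{\eta^2T}e^{\eta\sqrt Ty}-\lambda\gamma(1-\rho^2)K\right)_+\right).$$ Moreover $V^{put}(x_0,s_0,\lambda,K)=V^{put}_D(x_0,s_0,\lambda,K)\,V^{put}_A(s_0,\lambda,K)$, where $$V^{put}_D(x_0,s_0,\lambda,K)=-\frac1\gamma\exp\left(-\gamma e^{rT}(x_0-D^{put})-\frac{(\mu-r)^2}{2\sigma^2}T\right),\qquad V^{put}_A(s_0,\lambda,K)=\exp\left(\gamma e^{rT}A^{put}\right).$$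
   Context: Fix $T>0$, $r,\nu,\mu,x_0\in\mathbb R$, $\eta>0$, $\sigma>0$, $\rho\in(-1,1)$, $s_0>0$, $\lambda>0$, $\gamma>0$; $N$ is a standard Gaussian random variable; $\delta=\nu-\eta\rho\frac{\mu-r}{\sigma}$; $W$ is the Lambert function (inverse of $x\in(-1,\infty)\mapsto xe^x$); $x_+=\max(x,0)$. (Model: non-traded asset $dS=S(\nu dt+\eta dZ)$, traded asset $dP=P(\mu dt+\sigma dB)$, correlation $\rho$, bond rate $r$, utility $-\frac1\gamma e^{-\gamma x}$; the agent is short $\lambda$ put options with payoff $(K-S_T)_+$.) The selling reservation price and the value function of this short put position are $$p^{put}=\frac{e^{-rT}}{\gamma(1-\rho^2)}\ln\mathbb E\exp\left(\lambda\gamma(1-\rho^2)\left(K-s_0e^{(\delta-\frac{\eta^2}{2})T}e^{\eta\sqrt TN}\right)_+\right),$$ $$V^{put}(x_0,s_0,\lambda,K)=-\frac1\gamma e^{-\gamma x_0e^{rT}-\frac{(\mu-r)^2}{2\sigma^2}T}\left(\mathbb E\exp\left(\lambda\gamma(1-\rho^2)\left(K-s_0e^{(\delta-\frac{\eta^2}{2})T}e^{\eta\sqrt TN}\right)_+\right)\right)^{\frac1{1-\rho^2}}.$$ *)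

theory Defs
  imports "HOL-Probability.Probability"
begin

definition lambertW :: "real \<Rightarrow> real" where
  "lambertW z = (THE w. w > -1 \<and> w * exp w = z)"

definition EN :: "(real \<Rightarrow> real) \<Rightarrow> real" where
  "EN f = integral\<^sup>L (density lborel std_normal_density) f"

definition pos_part :: "real \<Rightarrow> real" where
  "pos_part x = max x 0"

definition delta_par :: "real \<Rightarrow> real \<Rightarrow> real \<Rightarrow> real \<Rightarrow> real \<Rightarrow> real \<Rightarrow> real" where
  "delta_par \<nu> \<eta> \<rho> \<mu> r \<sigma> = \<nu> - \<eta> * \<rho> * (\<mu> - r) / \<sigma>"

definition p_put :: "real \<Rightarrow> real \<Rightarrow> real \<Rightarrow> real \<Rightarrow> real \<Rightarrow> real \<Rightarrow> real \<Rightarrow> real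
    \<Rightarrow> real \<Rightarrow> real \<Rightarrow> real \<Rightarrow> real" where
  "p_put T r \<nu> \<mu> \<eta> \<sigma> \<rho> \<gamma> s0 lam K =
     exp (- r * T) / (\<gamma> * (1 - \<rho>\<^sup>2)) *
     ln (EN (\<lambda>y. exp (lam * \<gamma> * (1 - \<rho>\<^sup>2) *
        pos_part (K - s0 * exp ((delta_par \<nu> \<eta> \<rho> \<mu> r \<sigma> - \<eta>\<^sup>2 / 2) * T) * exp (\<eta> * sqrt T * y)))))"

definition V_put :: "real \<Rightarrow> real \<Rightarrow> real \<Rightarrow> real \<Rightarrow> real \<Rightarrow> real \<Rightarrow> real \<Rightarrow> real
    \<Rightarrow> real \<Rightarrow> real \<Rightarrow> real \<Rightarrow> real \<Rightarrow> real" where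
  "V_put T r \<nu> \<mu> \<eta> \<sigma> \<rho> \<gamma> x0 s0 lam K =
     - (1 / \<gamma>) * exp (- \<gamma> * x0 * exp (r * T) - (\<mu> - r)\<^sup>2 / (2 * \<sigma>\<^sup>2) * T) *
     (EN (\<lambda>y. exp (lam * \<gamma> * (1 - \<rho>\<^sup>2) *
        pos_part (K - s0 * exp ((delta_par \<nu> \<eta> \<rho> \<mu> r \<sigma> - \<eta>\<^sup>2 / 2) * T) * exp (\<eta> * sqrt T * y)))))
       powr (1 / (1 - \<rho>\<^sup>2))"

end

theory Submission
  imports Defs
begin

(* Write a = lam gamma (1 - rho^2), v = eta sqrt T and S_T = c e^{vN}, and let w = W(c v^2 a),
   i.e. w e^w = c v^2 a.  Shifting N by the drift w/v (Cameron-Martin) multiplies the density by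
   exp (w z / v - w^2 / (2 v^2)) and turns c e^{v (z - w/v)} into (w / (a v^2)) e^{vz}; with
   (x)_+ = x + (-x)_+ the exponent a (K - S_T)_+ becomes a K - w/v^2 - w^2/(2 v^2) plus the
   exponent of psi_K.  So E exp (a (K - S_T)_+) = exp (a K - ...) E psi_K(N), and its logarithm
   splits p^put into D^put + A^put.  As V^put is the Merton value function at the reduced wealth
   x_0 - p^put, it factorizes accordingly. *)

lemma strict_mono_on_times_exp: "strict_mono_on {0..} (\<lambda>x::real. x * exp x)"
  by (rule strict_mono_onI) (simp add: mult_strict_mono)

lemma lambertW_times_exp:
  fixes z :: real
  assumes "0 \<le> z"
  shows "lambertW z * exp (lambertW z) = z"
proof -
  have "\<exists>w. 0 \<le> w \<and> w \<le> z \<and> w * exp w = z"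
    using assms by (intro IVT allI impI continuous_intros) (auto simp: mult_le_cancel_left1)
  then obtain w where w: "0 \<le> w" "w * exp w = z" by blast
  have "u = w" if u: "u > -1" "u * exp u = z" for u
  proof -
    have "0 \<le> u"
      using u assms by (metis exp_gt_zero mult_neg_pos not_le)
    then show ?thesis
      using strict_mono_on_times_exp[THEN strict_mono_on_imp_inj_on] w u
      by (auto dest: inj_onD)
  qed
  then have "lambertW z = w"
    unfolding lambertW_def using w by (intro the_equality) auto
  with w show ?thesis by simp
qed

lemma EN_eq_integral_lborel:
  "f \<in> borel_measurable borel \<Longrightarrow> EN f = (\<integral>x. std_normal_density x * f x \<partial>lborel)"
  unfolding EN_def by (subst integral_density) auto

lemma EN_Cameron_Martin:
  fixes m :: real
  assumes "f \<in> borel_measurable borel"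
  shows "EN f = EN (\<lambda>z. exp (m * z - m\<^sup>2 / 2) * f (z - m))"
proof -
  have density_shift: "std_normal_density (z - m) = std_normal_density z * exp (m * z - m\<^sup>2 / 2)" for z
    by (simp add: normal_density_def exp_add[symmetric] power2_eq_square algebra_simps diff_divide_distrib)
  have "EN f = (\<integral>z. std_normal_density (- m + 1 * z) * f (- m + 1 * z) \<partial>lborel)"
    unfolding EN_eq_integral_lborel[OF assms]
    by (rule lborel_integral_real_affine[where c = 1 and t = "- m", THEN trans]) simp_all
  also have "\<dots> = (\<integral>z. std_normal_density z * (exp (m * z - m\<^sup>2 / 2) * f (z - m)) \<partial>lborel)"
    by (simp add: density_shift mult.assoc)
  also have "\<dots> = EN (\<lambda>z. exp (m * z - m\<^sup>2 / 2) * f (z - m))"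
    using assms by (simp add: EN_eq_integral_lborel)
  finally show ?thesis .
qed

lemma EN_ge_const:
  assumes "f \<in> borel_measurable borel" and "\<And>x. b \<le> f x" and "\<And>x. \<bar>f x\<bar> \<le> C"
  shows "b \<le> EN f"
proof -
  interpret real_distribution std_normal_distribution
    by (rule real_dist_normal_dist)
  have "integrable std_normal_distribution f"
    using assms(1,3) by (intro integrable_const_bound[where B = C]) auto
  then show ?thesis
    unfolding EN_def using assms(2) by (intro integral_ge_const) auto
qed

lemma pos_part_eq_add_pos_part_uminus: "pos_part x = x + pos_part (- x)"
  by (simp add: pos_part_def max_def)

lemma pos_part_mult_nonneg: "0 \<le> a \<Longrightarrow> a * pos_part x = pos_part (a * x)"
  by (simp add: pos_part_def max_mult_distrib_left)

lemma put_exponent_shift: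
  fixes a c v w K z :: real
  assumes "0 \<le> a" and "0 < v" and "w * exp w = c * v\<^sup>2 * a"
  shows "exp (w / v * z - (w / v)\<^sup>2 / 2) * exp (a * pos_part (K - c * exp (v * (z - w / v))))
       = exp (a * K - (w / v\<^sup>2 + w\<^sup>2 / (2 * v\<^sup>2)))
         * exp (- (w / v\<^sup>2) * (exp (v * z) - 1 - v * z) + pos_part (w / v\<^sup>2 * exp (v * z) - a * K))"
proof -
  have "exp (v * (z - w / v)) = exp (- w) * exp (v * z)"
    using assms(2) by (simp add: exp_add[symmetric] field_simps)
  then have "a * (c * exp (v * (z - w / v))) = (a * c * exp (- w)) * exp (v * z)"
    by (simp add: mult_ac)
  also have "a * c * exp (- w) = w / v\<^sup>2"
    using assms(2,3) by (simp add: exp_minus field_simps)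
  finally have spot: "a * (c * exp (v * (z - w / v))) = w / v\<^sup>2 * exp (v * z)" .
  have "a * pos_part (K - c * exp (v * (z - w / v))) = pos_part (a * K - w / v\<^sup>2 * exp (v * z))"
    using pos_part_mult_nonneg[OF assms(1)] spot by (simp add: right_diff_distrib)
  also have "\<dots> = a * K - w / v\<^sup>2 * exp (v * z) + pos_part (w / v\<^sup>2 * exp (v * z) - a * K)"
    by (subst pos_part_eq_add_pos_part_uminus) simp
  finally have payoff: "a * pos_part (K - c * exp (v * (z - w / v)))
      = a * K - w / v\<^sup>2 * exp (v * z) + pos_part (w / v\<^sup>2 * exp (v * z) - a * K)" .
  have exponent: "w / v * z - (w / v)\<^sup>2 / 2 + (a * K - w / v\<^sup>2 * E + P)
      = a * K - (w / v\<^sup>2 + w\<^sup>2 / (2 * v\<^sup>2)) + (- (w / v\<^sup>2) * (E - 1 - v * z) + P)" for E P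
    using assms(2) by (simp add: field_simps power2_eq_square)
  show ?thesis
    unfolding exp_add[symmetric] payoff exponent ..
qed

lemma one_le_EN_exp_put_payoff:
  fixes a c v K :: real
  assumes "0 \<le> a" and "0 \<le> c"
  shows "1 \<le> EN (\<lambda>y. exp (a * pos_part (K - c * exp (v * y))))"
proof (rule EN_ge_const)
  show "(\<lambda>y. exp (a * pos_part (K - c * exp (v * y)))) \<in> borel_measurable borel"
    unfolding pos_part_def by measurable
  show "1 \<le> exp (a * pos_part (K - c * exp (v * y)))" for y
    using assms(1) by (simp add: pos_part_def)
  have "pos_part (K - c * exp (v * y)) \<le> pos_part K" for y
    unfolding pos_part_def by (rule max.mono) (use assms(2) in simp_all)
  then show "\<bar>exp (a * pos_part (K - c * exp (v * y)))\<bar> \<le> exp (a * pos_part K)" for y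
    using assms(1) by (simp add: mult_left_mono)
qed

lemma EN_exp_put_payoff:
  fixes a c v w K :: real
  assumes "0 \<le> a" and "0 < v" and "w * exp w = c * v\<^sup>2 * a"
  shows "EN (\<lambda>y. exp (a * pos_part (K - c * exp (v * y))))
       = exp (a * K - (w / v\<^sup>2 + w\<^sup>2 / (2 * v\<^sup>2)))
         * EN (\<lambda>y. exp (- (w / v\<^sup>2) * (exp (v * y) - 1 - v * y) + pos_part (w / v\<^sup>2 * exp (v * y) - a * K)))"
proof -
  let ?F = "\<lambda>y. exp (a * pos_part (K - c * exp (v * y)))"
  have "?F \<in> borel_measurable borel"
    unfolding pos_part_def by measurable
  then have "EN ?F = EN (\<lambda>z. exp (w / v * z - (w / v)\<^sup>2 / 2) * ?F (z - w / v))"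
    by (rule EN_Cameron_Martin)
  also have "\<dots> = EN (\<lambda>z. exp (a * K - (w / v\<^sup>2 + w\<^sup>2 / (2 * v\<^sup>2)))
      * exp (- (w / v\<^sup>2) * (exp (v * z) - 1 - v * z) + pos_part (w / v\<^sup>2 * exp (v * z) - a * K)))"
    unfolding put_exponent_shift[OF assms] ..
  finally show ?thesis
    unfolding EN_def by simp
qed

lemma V_put_eq_value_at_reduced_wealth:
  assumes "0 < \<gamma>" and "-1 < \<rho>" and "\<rho> < 1" and "0 \<le> s0" and "0 \<le> lam"
  shows "V_put T r \<nu> \<mu> \<eta> \<sigma> \<rho> \<gamma> x0 s0 lam K
       = - (1 / \<gamma>) * exp (- \<gamma> * exp (r * T) * (x0 - p_put T r \<nu> \<mu> \<eta> \<sigma> \<rho> \<gamma> s0 lam K)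
                           - (\<mu> - r)\<^sup>2 / (2 * \<sigma>\<^sup>2) * T)"
proof -
  define X where "X = EN (\<lambda>y. exp (lam * \<gamma> * (1 - \<rho>\<^sup>2) *
    pos_part (K - s0 * exp ((delta_par \<nu> \<eta> \<rho> \<mu> r \<sigma> - \<eta>\<^sup>2 / 2) * T) * exp (\<eta> * sqrt T * y))))"
  have d: "0 < 1 - \<rho>\<^sup>2"
    using assms(2,3) by (simp add: abs_square_less_1 abs_less_iff)
  have "1 \<le> X"
    unfolding X_def using assms d
    by (intro one_le_EN_exp_put_payoff[where v = "\<eta> * sqrt T"]) simp_all
  moreover have "\<gamma> * exp (r * T) * (exp (- r * T) / (\<gamma> * (1 - \<rho>\<^sup>2)) * ln X) = ln X / (1 - \<rho>\<^sup>2)"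
    using assms(1) d by (simp add: exp_minus field_simps)
  ultimately show ?thesis
    unfolding V_put_def p_put_def X_def[symmetric]
    by (simp add: powr_def right_diff_distrib exp_add[symmetric])
qed

lemma p_put_lambertW_split:
  fixes T r \<nu> \<mu> \<eta> \<sigma> \<rho> s0 lam \<gamma> K :: real
  assumes "0 < T" and "0 < \<eta>" and "-1 < \<rho>" and "\<rho> < 1"
    and "0 < s0" and "0 < lam" and "0 < \<gamma>"
  defines "wbar \<equiv> lambertW (s0 * exp ((delta_par \<nu> \<eta> \<rho> \<mu> r \<sigma> - \<eta>\<^sup>2 / 2) * T)
                              * \<eta>\<^sup>2 * T * lam * \<gamma> * (1 - \<rho>\<^sup>2))"
  defines "\<psi> \<equiv> \<lambda>y. exp (- (wbar / (\<eta>\<^sup>2 * T)) * (exp (\<eta> * sqrt T * y) - 1 - \<eta> * sqrt T * y)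
                  + pos_part (wbar / (\<eta>\<^sup>2 * T) * exp (\<eta> * sqrt T * y) - lam * \<gamma> * (1 - \<rho>\<^sup>2) * K))"
  shows "p_put T r \<nu> \<mu> \<eta> \<sigma> \<rho> \<gamma> s0 lam K
       = (lam * exp (- r * T) * K - exp (- r * T) / (\<gamma> * (1 - \<rho>\<^sup>2)) *
            (wbar / (\<eta>\<^sup>2 * T) + wbar\<^sup>2 / (2 * \<eta>\<^sup>2 * T)))
         + exp (- r * T) / (\<gamma> * (1 - \<rho>\<^sup>2)) * ln (EN \<psi>)"
proof -
  define a where "a = lam * \<gamma> * (1 - \<rho>\<^sup>2)"
  define c where "c = s0 * exp ((delta_par \<nu> \<eta> \<rho> \<mu> r \<sigma> - \<eta>\<^sup>2 / 2) * T)"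
  define v where "v = \<eta> * sqrt T"
  define B where "B = wbar / (\<eta>\<^sup>2 * T) + wbar\<^sup>2 / (2 * \<eta>\<^sup>2 * T)"
  define F where "F = EN (\<lambda>y. exp (a * pos_part (K - c * exp (v * y))))"
  have d: "0 < 1 - \<rho>\<^sup>2"
    using assms(3,4) by (simp add: abs_square_less_1 abs_less_iff)
  have a: "0 < a" and c: "0 < c" and v: "0 < v" and v2: "v\<^sup>2 = \<eta>\<^sup>2 * T"
    using assms d by (simp_all add: a_def c_def v_def power_mult_distrib)
  have "c * v\<^sup>2 * a = s0 * exp ((delta_par \<nu> \<eta> \<rho> \<mu> r \<sigma> - \<eta>\<^sup>2 / 2) * T)
                            * \<eta>\<^sup>2 * T * lam * \<gamma> * (1 - \<rho>\<^sup>2)"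
    unfolding a_def c_def v2 by (simp add: mult_ac)
  then have "wbar * exp wbar = c * v\<^sup>2 * a"
    unfolding wbar_def using a c by (metis lambertW_times_exp zero_le_mult_iff zero_le_power2 less_imp_le)
  from EN_exp_put_payoff[OF less_imp_le[OF a] v this, of K]
  have F: "F = exp (a * K - B) * EN \<psi>"
    unfolding F_def B_def \<psi>_def v2 by (simp add: v_def a_def mult_ac)
  moreover have "1 \<le> F"
    unfolding F_def using a c by (intro one_le_EN_exp_put_payoff) simp_all
  ultimately have "0 < EN \<psi>"
    by (metis exp_gt_zero order_less_le_trans zero_less_mult_pos zero_less_one)
  with F have "ln F = a * K - B + ln (EN \<psi>)"
    by (simp add: ln_mult)
  then have "p_put T r \<nu> \<mu> \<eta> \<sigma> \<rho> \<gamma> s0 lam K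
      = exp (- r * T) / (\<gamma> * (1 - \<rho>\<^sup>2)) * (a * K - B) + exp (- r * T) / (\<gamma> * (1 - \<rho>\<^sup>2)) * ln (EN \<psi>)"
    unfolding p_put_def F_def[unfolded a_def c_def v_def, symmetric] a_def by (simp add: distrib_left)
  moreover have "exp (- r * T) / (\<gamma> * (1 - \<rho>\<^sup>2)) * (a * K - B)
      = lam * exp (- r * T) * K - exp (- r * T) / (\<gamma> * (1 - \<rho>\<^sup>2)) * B"
    unfolding a_def using d assms(7) by (simp add: field_simps)
  ultimately show ?thesis
    unfolding B_def by simp
qed

theorem theorem5:
  fixes T r \<nu> \<mu> x0 \<eta> \<sigma> \<rho> s0 lam \<gamma> K :: real
  assumes "T > 0" and "\<eta> > 0" and "\<sigma> > 0" and "-1 < \<rho>" and "\<rho> < 1"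
    and "s0 > 0" and "lam > 0" and "\<gamma> > 0" and "K > 0"
  defines "wbar \<equiv> lambertW (s0 * exp ((delta_par \<nu> \<eta> \<rho> \<mu> r \<sigma> - \<eta>\<^sup>2 / 2) * T)
                              * \<eta>\<^sup>2 * T * lam * \<gamma> * (1 - \<rho>\<^sup>2))"
  defines "Dput \<equiv> lam * exp (- r * T) * K - exp (- r * T) / (\<gamma> * (1 - \<rho>\<^sup>2)) *
                   (wbar / (\<eta>\<^sup>2 * T) + wbar\<^sup>2 / (2 * \<eta>\<^sup>2 * T))"
  defines "\<psi> \<equiv> (\<lambda>y. exp (- (wbar / (\<eta>\<^sup>2 * T)) * (exp (\<eta> * sqrt T * y) - 1 - \<eta> * sqrt T * y)
                  + pos_part (wbar / (\<eta>\<^sup>2 * T) * exp (\<eta> * sqrt T * y) - lam * \<gamma> * (1 - \<rho>\<^sup>2) * K)))"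
  defines "Aput \<equiv> exp (- r * T) / (\<gamma> * (1 - \<rho>\<^sup>2)) * ln (EN \<psi>)"
  defines "VD \<equiv> - (1 / \<gamma>) * exp (- \<gamma> * exp (r * T) * (x0 - Dput) - (\<mu> - r)\<^sup>2 / (2 * \<sigma>\<^sup>2) * T)"
  defines "VA \<equiv> exp (\<gamma> * exp (r * T) * Aput)"
  assumes "K \<ge> 1 / (lam * \<gamma> * (1 - \<rho>\<^sup>2)) * (wbar / (\<eta>\<^sup>2 * T) + wbar\<^sup>2 / (2 * \<eta>\<^sup>2 * T))"
  shows "p_put T r \<nu> \<mu> \<eta> \<sigma> \<rho> \<gamma> s0 lam K = Dput + Aput
     \<and> V_put T r \<nu> \<mu> \<eta> \<sigma> \<rho> \<gamma> x0 s0 lam K = VD * VA"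
proof
  show price: "p_put T r \<nu> \<mu> \<eta> \<sigma> \<rho> \<gamma> s0 lam K = Dput + Aput"
    unfolding Dput_def Aput_def \<psi>_def wbar_def
    using assms(1,2,4-8) by (rule p_put_lambertW_split)
  have "V_put T r \<nu> \<mu> \<eta> \<sigma> \<rho> \<gamma> x0 s0 lam K
      = - (1 / \<gamma>) * exp (- \<gamma> * exp (r * T) * (x0 - (Dput + Aput)) - (\<mu> - r)\<^sup>2 / (2 * \<sigma>\<^sup>2) * T)"
    unfolding price[symmetric] using assms(4-8) by (intro V_put_eq_value_at_reduced_wealth) simp_all
  then show "V_put T r \<nu> \<mu> \<eta> \<sigma> \<rho> \<gamma> x0 s0 lam K = VD * VA"
    unfolding VD_def VA_def by (simp add: exp_add[symmetric] algebra_simps)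
qed

end
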